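(* Let $P=[0,1]$, let $r$ be a positive integer, let $\sigma_r=\sum_{i=r+1}^{2r+1}\frac1i$, and let $Q=\{q_1,\dots,q_r\}$ with $q_i=\frac{1}{\sigma_r}\sum_{j=r+1}^{r+i}\frac1j$ for $i\in[r]$ (so the $r+1$ intervals cut from $[0,1]$ by $Q$ have lengths proportional to $\frac1{r+1}:\frac1{r+2}:\dots:\frac1{2r+1}$). Let $\tau$ be any ordering of $Q$. Consider the online algorithm that maintains a set $\hat Q$ of positions ever used, each labelled occupied or vacant (initially empty); when a point departs its position becomes vacant; when a point arrives, if some position in $\hat Q$ is vacant the point is put at an arbitrary vacant position (now occupied); otherwise, if $Q\not\subseteq\hat Q$ the point is put at the first position of $Q\setminus\hat Q$ according to $\tau$, and if $Q\subseteq\hat Q$ it is put at the midpoint of a largest interval into which $[0,1]$ is divided by $\hat Q$; in both latter cases the new position is added to $\hat Q$ as occupied. Then for every instance $S$ whose maximum number $m$ of simultaneously present points satisfies $m>r$, we have $OPT_A(S;P)\le 2\sigma_r\cdot\min_{t\le T}d_{min}(t;X)$, where $X$ is the algorithm's output.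
   Context: Distances are Euclidean; $\partial P=\{0,1\}$. An instance is a sequence $S=((s_1,d_1),\dots,(s_n,d_n))$ with $s_i<d_i$, $0=s_1\le\dots\le s_n$; point $i$ is present at time $t$ iff $s_i\le t\le d_i$; $T=\max_i d_i$; $m=\max_{t\le T}|\{i:s_i\le t\le d_i\}|$. For locations $X=(X_1,\dots,X_n)\in P^n$, $d_{min}(t;X)=\min\{dis(X_i,\partial P),dis(X_i,X_j)\}$ over present points $i\ne j$ at time $t$, and $OPT_A(S;P)=\max_X\min_{t\le T}d_{min}(t;X)$. The algorithm is online: it places each arriving point irrevocably without knowing future events; events are chosen by an adaptive adversary. *)

theory Defs
  imports Complex_Main "HOL-Library.Extended_Real"
begin

text \<open>Points are indexed 0..<n (paper index i corresponds to i-1).\<close>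

definition sigma_r :: "nat \<Rightarrow> real" where
  "sigma_r r = (\<Sum>i=r+1..2*r+1. 1 / real i)"

definition qpt :: "nat \<Rightarrow> nat \<Rightarrow> real" where
  "qpt r i = (\<Sum>j=r+1..r+i. 1 / real j) / sigma_r r"

definition Qset :: "nat \<Rightarrow> real set" where
  "Qset r = qpt r ` {1..r}"

definition is_instance :: "nat \<Rightarrow> (nat \<Rightarrow> real) \<Rightarrow> (nat \<Rightarrow> real) \<Rightarrow> bool" where
  "is_instance n s d \<longleftrightarrow> n \<ge> 1 \<and> s 0 = 0 \<and>
     (\<forall>i j. i \<le> j \<and> j < n \<longrightarrow> s i \<le> s j) \<and> (\<forall>i<n. s i < d i)"

definition present :: "nat \<Rightarrow> (nat \<Rightarrow> real) \<Rightarrow> (nat \<Rightarrow> real) \<Rightarrow> real \<Rightarrow> nat set" where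
  "present n s d t = {i. i < n \<and> s i \<le> t \<and> t \<le> d i}"

definition horizon :: "nat \<Rightarrow> (nat \<Rightarrow> real) \<Rightarrow> real" where
  "horizon n d = Max (d ` {..<n})"

definition maxload :: "nat \<Rightarrow> (nat \<Rightarrow> real) \<Rightarrow> (nat \<Rightarrow> real) \<Rightarrow> nat" where
  "maxload n s d = Max {card (present n s d t) | t. t \<le> horizon n d}"

text \<open>Minimum distance at time t (in ereal; empty minimum = \<infinity>).
  The distance of x to the boundary {0,1} of P is min |x - 0| |x - 1|.\<close>
definition dmin :: "nat \<Rightarrow> (nat \<Rightarrow> real) \<Rightarrow> (nat \<Rightarrow> real) \<Rightarrow> real \<Rightarrow> (nat \<Rightarrow> real) \<Rightarrow> ereal" where
  "dmin n s d t X = Inf (ereal `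
     ({min \<bar>X i - 0\<bar> \<bar>X i - 1\<bar> | i. i \<in> present n s d t} \<union>
      {\<bar>X i - X j\<bar> | i j. i \<in> present n s d t \<and> j \<in> present n s d t \<and> i \<noteq> j}))"

definition objective :: "nat \<Rightarrow> (nat \<Rightarrow> real) \<Rightarrow> (nat \<Rightarrow> real) \<Rightarrow> (nat \<Rightarrow> real) \<Rightarrow> ereal" where
  "objective n s d X = (INF t\<in>{..horizon n d}. dmin n s d t X)"

definition OPT_A :: "nat \<Rightarrow> (nat \<Rightarrow> real) \<Rightarrow> (nat \<Rightarrow> real) \<Rightarrow> ereal" where
  "OPT_A n s d = (SUP X\<in>{X. \<forall>i<n. X i \<in> {0..1}}. objective n s d X)"

definition gap_interval :: "real set \<Rightarrow> real \<Rightarrow> real \<Rightarrow> bool" where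
  "gap_interval U a b \<longleftrightarrow> a < b \<and> a \<in> U \<union> {0,1} \<and> b \<in> U \<union> {0,1} \<and>
     (\<forall>u\<in>U. \<not> (a < u \<and> u < b))"

definition largest_gap :: "real set \<Rightarrow> real \<Rightarrow> real \<Rightarrow> bool" where
  "largest_gap U a b \<longleftrightarrow> gap_interval U a b \<and>
     (\<forall>a' b'. gap_interval U a' b' \<longrightarrow> b' - a' \<le> b - a)"

text \<open>X is a possible output of the (nondeterministic) online algorithm with ordering tau of Q.
  When point k arrives (time s k), the used positions are those of earlier points; a used
  position is occupied iff an earlier point still present at time s k lies there
  (point i is present at s k iff s k \<le> d i, presence intervals being closed).\<close>
definition alg_run :: "nat \<Rightarrow> real list \<Rightarrow> nat \<Rightarrow> (nat \<Rightarrow> real) \<Rightarrow> (nat \<Rightarrow> real) \<Rightarrow> (nat \<Rightarrow> real) \<Rightarrow> bool" where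
  "alg_run r tau n s d X \<longleftrightarrow> (\<forall>k<n.
     (let U = X ` {..<k};
          Occ = X ` {i. i < k \<and> s k \<le> d i};
          Vac = U - Occ
      in if Vac \<noteq> {} then X k \<in> Vac
         else if \<not> Qset r \<subseteq> U then X k = hd (filter (\<lambda>q. q \<notin> U) tau)
         else (\<exists>a b. largest_gap U a b \<and> X k = (a + b) / 2)))"

end

theory Submission
  imports Defs
begin

text \<open>
  At a time of maximum load m, the m present points cut [0,1] into m + 1 pieces, so every
  placement has d_min at most 1/(m + 1) then: OPT_A is at most 1/(m + 1).

  The algorithm opens a new position only when all used positions are occupied; hence the new
  point and the occupants are simultaneously present, at most m positions are ever used, and
  simultaneously present points never share a position. The used positions are first points of Q
  and then midpoints of largest gaps, so every gap is a segment [q_i, q_(i+1)] of Q halved some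
  number of times, and any two gaps differ by a factor at most 2. If some gap has length l, the
  segment i therefore contains a gap of length |q_(i+1) - q_i| / 2^E_i at most 2 l, and is cut
  into at least 2^E_i >= 1 / (2 sigma_r l (r + 1 + i)) pieces. Since the 2^E_i are powers of
  two, their sum is at least 1 / (2 sigma_r l); but the sum is at most the number of used
  positions plus one, hence at most m + 1. So all distances are at least 1 / (2 sigma_r (m + 1)).
\<close>

lemma sigma_r_pos: "r > 0 \<Longrightarrow> sigma_r r > 0"
  unfolding sigma_r_def by (intro sum_pos) auto

lemma qpt_0 [simp]: "qpt r 0 = 0"
  by (simp add: qpt_def)

lemma qpt_Suc: "qpt r (Suc i) = qpt r i + 1 / (real (r + Suc i) * sigma_r r)"
  by (simp add: qpt_def add_divide_distrib)

lemma qpt_last: "r > 0 \<Longrightarrow> qpt r (Suc r) = 1"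
proof -
  assume "r > 0"
  have "r + Suc r = 2 * r + 1" by simp
  then have "qpt r (Suc r) = sigma_r r / sigma_r r"
    unfolding qpt_def sigma_r_def by (simp only:)
  with sigma_r_pos[OF \<open>r > 0\<close>] show ?thesis by simp
qed

lemma strict_mono_qpt: "r > 0 \<Longrightarrow> strict_mono (qpt r)"
  unfolding strict_mono_Suc_iff by (simp add: qpt_Suc sigma_r_pos)

lemma Qset_with_boundary: "r > 0 \<Longrightarrow> Qset r \<union> {0, 1} = qpt r ` {..Suc r}"
proof -
  assume "r > 0"
  have "{..Suc r} = insert 0 (insert (Suc r) {1..r})" by auto
  then show ?thesis using qpt_last[OF \<open>r > 0\<close>] by (auto simp: Qset_def)
qed

lemma qpt_in_refinement:
  "r > 0 \<Longrightarrow> Qset r \<subseteq> U \<Longrightarrow> i \<le> Suc r \<Longrightarrow> qpt r i \<in> U \<union> {0, 1}"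
  using Qset_with_boundary by blast

lemma Qset_subset: "r > 0 \<Longrightarrow> Qset r \<subseteq> {0<..<1}"
proof
  fix x assume "r > 0" "x \<in> Qset r"
  then obtain i where "1 \<le> i" "i \<le> r" "x = qpt r i" by (auto simp: Qset_def)
  then have "qpt r 0 < x" "x < qpt r (Suc r)"
    using strict_mono_less[OF strict_mono_qpt[OF \<open>r > 0\<close>], of 0 i]
      strict_mono_less[OF strict_mono_qpt[OF \<open>r > 0\<close>], of i "Suc r"] by auto
  then show "x \<in> {0<..<1}" using qpt_last[OF \<open>r > 0\<close>] by simp
qed

lemma finite_Qset: "finite (Qset r)"
  by (simp add: Qset_def)

lemma card_Qset_le: "card (Qset r) \<le> r"
  unfolding Qset_def using card_image_le[of "{1..r}" "qpt r"] by simp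

lemma gap_interval_QsetE:
  assumes "r > 0" "gap_interval (Qset r) a b"
  obtains i where "i \<le> r" "a = qpt r i" "b = qpt r (Suc i)"
proof -
  have mono: "qpt r i < qpt r j \<longleftrightarrow> i < j" for i j
    using strict_mono_less[OF strict_mono_qpt[OF assms(1)]] .
  obtain i j where ij: "i \<le> Suc r" "j \<le> Suc r" "a = qpt r i" "b = qpt r j"
    using assms Qset_with_boundary unfolding gap_interval_def by (metis atMost_iff imageE)
  have "i < j" using assms(2) ij mono unfolding gap_interval_def by simp
  moreover have "\<not> Suc i < j"
  proof
    assume "Suc i < j"
    then have "qpt r (Suc i) \<in> Qset r" using ij by (auto simp: Qset_def)
    moreover have "a < qpt r (Suc i)" "qpt r (Suc i) < b" using \<open>Suc i < j\<close> ij mono by auto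
    ultimately show False using assms(2) unfolding gap_interval_def by blast
  qed
  ultimately have "j = Suc i" by simp
  with ij show thesis using that by simp
qed

lemma qpt_segment_le_twice:
  assumes "r > 0" "i \<le> r" "j \<le> r"
  shows "qpt r (Suc i) - qpt r i \<le> 2 * (qpt r (Suc j) - qpt r j)"
proof -
  have \<sigma>: "sigma_r r > 0" using sigma_r_pos[OF assms(1)] .
  have "1 / (real (r + Suc i) * sigma_r r) = 2 / (2 * real (r + Suc i) * sigma_r r)"
    by (simp only: mult.assoc) simp
  also have "\<dots> \<le> 2 / (real (r + Suc j) * sigma_r r)"
    using assms \<sigma> by (intro divide_left_mono mult_right_mono mult_pos_pos) auto
  finally have "1 / (real (r + Suc i) * sigma_r r) \<le> 2 / (real (r + Suc j) * sigma_r r)" .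
  then show ?thesis by (simp add: qpt_Suc)
qed

definition consecutive :: "real set \<Rightarrow> real \<Rightarrow> real \<Rightarrow> bool" where
  "consecutive S a b \<longleftrightarrow> a < b \<and> a \<in> S \<and> b \<in> S \<and> (\<forall>u\<in>S. \<not> (a < u \<and> u < b))"

lemma gap_interval_if_consecutive: "consecutive (U \<union> {0, 1}) a b \<Longrightarrow> gap_interval U a b"
  unfolding gap_interval_def consecutive_def by blast

lemma gap_interval_iff_consecutive:
  "U \<subseteq> {0..1} \<Longrightarrow> gap_interval U a b \<longleftrightarrow> consecutive (U \<union> {0, 1}) a b"
  unfolding gap_interval_def consecutive_def by fastforce

lemma consecutive_exists:
  assumes "finite S" "a \<in> S" "b \<in> S" "a < b"
  obtains b' where "consecutive S a b'" "b' \<le> b"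
proof -
  define b' where "b' = Min {w \<in> S. a < w}"
  have fin: "finite {w \<in> S. a < w}" and ne: "{w \<in> S. a < w} \<noteq> {}" using assms by auto
  have "b' \<in> {w \<in> S. a < w}" unfolding b'_def by (rule Min_in[OF fin ne])
  moreover have "\<forall>w\<in>S. a < w \<longrightarrow> b' \<le> w" unfolding b'_def using Min_le[OF fin] by blast
  ultimately show thesis using that assms unfolding consecutive_def by force
qed

lemma consecutive_insert:
  assumes "consecutive S a0 b0" "a0 < x" "x < b0" "consecutive (insert x S) a b"
  shows "consecutive S a b \<or> (a = a0 \<and> b = x) \<or> (a = x \<and> b = b0)"
proof -
  have a0b0: "a0 \<in> S" "b0 \<in> S" "\<forall>u\<in>S. \<not> (a0 < u \<and> u < b0)"
    and ab: "a < b" "a \<in> insert x S" "b \<in> insert x S" "\<forall>u\<in>insert x S. \<not> (a < u \<and> u < b)"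
    using assms(1,4) unfolding consecutive_def by auto
  consider "a = x" | "b = x" | "a \<noteq> x" "b \<noteq> x" by blast
  then show ?thesis
  proof cases
    case 1
    then have "b \<in> S" using ab(1,3) by auto
    then have "\<not> b < b0" using a0b0(3) ab(1) 1 assms(2) by force
    moreover have "\<not> b0 < b" using ab(4) a0b0(2) 1 assms(3) by blast
    ultimately show ?thesis using 1 by simp
  next
    case 2
    then have "a \<in> S" using ab(1,2) by auto
    then have "\<not> a0 < a" using a0b0(3) ab(1) 2 assms(3) by force
    moreover have "\<not> a < a0" using ab(4) a0b0(1) 2 assms(2) by blast
    ultimately show ?thesis using 2 by simp
  next
    case 3
    then show ?thesis using ab unfolding consecutive_def by auto
  qed
qed

lemma interval_le_card_mult_max_gap:
  assumes "finite S" "A \<in> S" "B \<in> S" "A < B" "S \<subseteq> {A..B}"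
    and "\<And>a b. consecutive S a b \<Longrightarrow> b - a \<le> L"
  shows "B - A \<le> (real (card S) - 1) * L"
  using assms
proof (induction "card S" arbitrary: S B rule: less_induct)
  case less
  define B' where "B' = Max (S - {B})"
  have fin: "finite (S - {B})" and ne: "S - {B} \<noteq> {}" using less.prems(1,2,4) by auto
  have B': "B' \<in> S - {B}" "\<forall>w\<in>S - {B}. w \<le> B'"
    unfolding B'_def using Max_in[OF fin ne] Max_ge[OF fin] by auto
  then have "B' < B" "A \<le> B'" using less.prems(2,4,5) by fastforce+
  have "consecutive S B' B" unfolding consecutive_def using B' \<open>B' < B\<close> less.prems(3) by force
  then have last: "B - B' \<le> L" using less.prems(6) by blast
  have card: "card S = Suc (card (S - {B}))" using less.prems(1,3) by (rule card_Suc_Diff1[symmetric])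
  show ?case
  proof (cases "A = B'")
    case True
    have "w = A" if "w \<in> S - {B}" for w
      using that B'(2) less.prems(5) True by (meson DiffD1 atLeastAtMost_iff order.antisym subsetD)
    then have "S - {B} = {A}" using less.prems(2,4) by blast
    then show ?thesis using last True card by simp
  next
    case False
    have "B' - A \<le> (real (card (S - {B})) - 1) * L"
    proof (rule less.hyps)
      show "card (S - {B}) < card S" using card by simp
      show "S - {B} \<subseteq> {A..B'}" using B'(2) less.prems(5) by fastforce
      show "b - a \<le> L" if ab: "consecutive (S - {B}) a b" for a b
      proof -
        have "b \<le> B'" using ab B'(2) unfolding consecutive_def by auto
        then have "consecutive S a b" using ab \<open>B' < B\<close> unfolding consecutive_def by force
        then show ?thesis by (rule less.prems(6))
      qed
      show "A < B'" using \<open>A \<le> B'\<close> False by simp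
    qed (use less.prems B' in auto)
    then show ?thesis using last card by (simp add: algebra_simps)
  qed
qed

definition separated :: "real \<Rightarrow> real set \<Rightarrow> bool" where
  "separated \<delta> U \<longleftrightarrow> (\<forall>x\<in>U \<union> {0, 1}. \<forall>y\<in>U \<union> {0, 1}. x < y \<longrightarrow> \<delta> \<le> y - x)"

lemma separatedI_gap_interval:
  assumes "finite U" "\<And>a b. gap_interval U a b \<Longrightarrow> \<delta> \<le> b - a"
  shows "separated \<delta> U"
  unfolding separated_def
proof (intro ballI impI)
  fix x y assume "x \<in> U \<union> {0, 1}" "y \<in> U \<union> {0, 1}" "x < y"
  then obtain y' where "consecutive (U \<union> {0, 1}) x y'" "y' \<le> y"
    using consecutive_exists[of "U \<union> {0, 1}"] assms(1) by blast
  then have "\<delta> \<le> y' - x" using assms(2) gap_interval_if_consecutive by blast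
  with \<open>y' \<le> y\<close> show "\<delta> \<le> y - x" by simp
qed

lemma separated_mono:
  assumes "separated \<delta>' W" "U \<subseteq> W" "\<delta> \<le> \<delta>'"
  shows "separated \<delta> U"
proof -
  have "U \<union> {0, 1} \<subseteq> W \<union> {0, 1}" using assms(2) by blast
  then show ?thesis using assms(1,3) unfolding separated_def by (meson order_trans subsetD)
qed

lemma card_mult_le_Max:
  fixes V :: "real set"
  assumes "finite V" "V \<noteq> {}" "\<forall>v\<in>V. h \<le> v" "\<forall>v\<in>V. \<forall>w\<in>V. v < w \<longrightarrow> h \<le> w - v"
  shows "real (card V) * h \<le> Max V"
  using assms
proof (induction "card V" arbitrary: V rule: less_induct)
  case less
  define M where "M = Max V"
  have M: "M \<in> V" "\<forall>v\<in>V. v \<le> M" unfolding M_def using less.prems(1,2) by auto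
  show ?case
  proof (cases "V - {M} = {}")
    case True
    then have "V = {M}" using M by blast
    then have "card V = 1" "h \<le> M" using less.prems(3) by auto
    then show ?thesis using M_def by simp
  next
    case False
    have card: "card V = Suc (card (V - {M}))" using less.prems(1) M(1) by (rule card_Suc_Diff1[symmetric])
    have "real (card (V - {M})) * h \<le> Max (V - {M})"
      using card less.prems False by (intro less.hyps) auto
    moreover have "Max (V - {M}) \<in> V - {M}" using less.prems(1) False by (intro Max_in) auto
    then have "h \<le> M - Max (V - {M})" using less.prems(4) M by force
    ultimately show ?thesis using card M_def by (simp add: algebra_simps)
  qed
qed

lemma dyadic_partition_gap_exponent:
  assumes "finite S" "A \<in> S" "B \<in> S" "A < B" "S \<subseteq> {A..B}"
    and dyadic: "\<And>a b. consecutive S a b \<Longrightarrow> \<exists>e::nat. b - a = (B - A) / 2 ^ e"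
  obtains a b E where "consecutive S a b" "b - a = (B - A) / 2 ^ E" "2 ^ E \<le> real (card S) - 1"
proof -
  define G where "G = {e::nat. \<exists>a b. consecutive S a b \<and> b - a = (B - A) / 2 ^ e}"
  obtain b1 where "consecutive S A b1" using consecutive_exists assms(1-4) by metis
  then have "G \<noteq> {}" unfolding G_def using dyadic by blast
  define E where "E = (LEAST e. e \<in> G)"
  have "E \<in> G" unfolding E_def using \<open>G \<noteq> {}\<close> by (auto intro: LeastI)
  then obtain a b where ab: "consecutive S a b" "b - a = (B - A) / 2 ^ E" unfolding G_def by blast
  have "b' - a' \<le> (B - A) / 2 ^ E" if gap: "consecutive S a' b'" for a' b'
  proof -
    obtain e where e: "b' - a' = (B - A) / 2 ^ e" using dyadic[OF gap] by blast
    then have "E \<le> e" unfolding E_def G_def using gap by (auto intro: Least_le)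
    then have "(B - A) / 2 ^ e \<le> (B - A) / 2 ^ E"
      using assms(4) by (intro divide_left_mono) (auto intro: power_increasing)
    then show ?thesis using e by simp
  qed
  then have "B - A \<le> (real (card S) - 1) * ((B - A) / 2 ^ E)"
    using interval_le_card_mult_max_gap assms(1-5) by blast
  then have "(B - A) * 2 ^ E \<le> (B - A) * (real (card S) - 1)" by (simp add: field_simps)
  then have "2 ^ E \<le> real (card S) - 1" using assms(4) by simp
  then show thesis using that ab by blast
qed

lemma consecutive_Int_atLeastAtMost:
  "consecutive (S \<inter> {A..B}) a b \<Longrightarrow> consecutive S a b"
  unfolding consecutive_def by (meson IntE IntI atLeastAtMost_iff less_imp_le order_trans)

lemma card_eq_sum_segments:
  fixes q :: "nat \<Rightarrow> real"
  assumes "finite S" "strict_mono q" "\<And>i. i \<le> N \<Longrightarrow> q i \<in> S"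
  shows "real (card (S \<inter> {q 0..q N})) = 1 + (\<Sum>i<N. real (card (S \<inter> {q i..q (Suc i)})) - 1)"
  using assms(3)
proof (induction N)
  case 0
  then have "S \<inter> {q 0..q 0} = {q 0}" by auto
  then show ?case by simp
next
  case (Suc N)
  have mono: "q 0 \<le> q N" "q N \<le> q (Suc N)"
    using assms(2) by (auto simp: strict_mono_less_eq)
  have "S \<inter> {q 0..q (Suc N)} = (S \<inter> {q 0..q N}) \<union> (S \<inter> {q N..q (Suc N)})"
    using mono by auto
  moreover have "(S \<inter> {q 0..q N}) \<inter> (S \<inter> {q N..q (Suc N)}) = {q N}"
    using mono Suc.prems by auto
  ultimately have "card (S \<inter> {q 0..q (Suc N)}) + 1
      = card (S \<inter> {q 0..q N}) + card (S \<inter> {q N..q (Suc N)})"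
    using card_Un_Int[of "S \<inter> {q 0..q N}" "S \<inter> {q N..q (Suc N)}"] assms(1) by simp
  then show ?case using Suc by simp
qed

section \<open>Dyadic refinements of Q\<close>

lemma sum_powers_of_two_ge:
  fixes z :: real and E :: "nat \<Rightarrow> nat"
  assumes "\<And>i. i \<le> r \<Longrightarrow> z \<le> 2 ^ E i * real (r + Suc i)"
  shows "z \<le> (\<Sum>i\<le>r. 2 ^ E i)"
proof -
  \<comment> \<open>All powers are at least the least one, 2^k; those with 2^k (r + 1 + i) < z are at least 2^(k+1).\<close>
  define k where "k = Min (E ` {..r})"
  have k_le: "k \<le> E i" if "i \<le> r" for i
    unfolding k_def using that by simp
  have "k \<in> E ` {..r}" unfolding k_def by (rule Min_in) auto
  then obtain i0 where i0: "i0 \<le> r" "E i0 = k" by auto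
  define t where "t = (LEAST t. z \<le> 2 ^ k * real (r + Suc t))"
  have "z \<le> 2 ^ k * real (r + Suc i0)" using assms[OF i0(1)] i0(2) by simp
  then have t: "z \<le> 2 ^ k * real (r + Suc t)" "t \<le> i0"
    unfolding t_def by (auto intro: LeastI Least_le)
  have doubled: "2 * 2 ^ k \<le> (2::real) ^ E i" if "i < t" "i \<le> r" for i
  proof -
    have "2 ^ k * real (r + Suc i) < z"
      using not_less_Least[of i "\<lambda>t. z \<le> 2 ^ k * real (r + Suc t)"] that(1) t_def by simp
    also have "\<dots> \<le> 2 ^ E i * real (r + Suc i)" using assms that(2) .
    finally have "k < E i" by simp
    then show ?thesis by (metis power_Suc power_increasing Suc_leI one_le_numeral)
  qed
  have "{i \<in> {..r}. i < t} = {..<t}" using t(2) i0(1) by auto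
  then have "(\<Sum>i\<le>r. if i < t then (2::real) ^ k else 0) = real t * 2 ^ k"
    using sum.inter_filter[of "{..r}" "\<lambda>_. (2::real) ^ k" "\<lambda>i. i < t"] by simp
  then have "2 ^ k * real (r + Suc t) = (\<Sum>i\<le>r. 2 ^ k + (if i < t then 2 ^ k else 0))"
    by (simp add: sum.distrib algebra_simps)
  also have "\<dots> \<le> (\<Sum>i\<le>r. 2 ^ E i)"
    using k_le doubled by (intro sum_mono) (auto intro: power_increasing)
  finally show ?thesis using t(1) by simp
qed

definition dyadic_gaps :: "nat \<Rightarrow> real set \<Rightarrow> bool" where
  "dyadic_gaps r U \<longleftrightarrow> (\<forall>a b. gap_interval U a b \<longrightarrow> (\<exists>i\<le>r. \<exists>e::nat.
     qpt r i \<le> a \<and> b \<le> qpt r (Suc i) \<and> b - a = (qpt r (Suc i) - qpt r i) / 2 ^ e))"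

definition balanced_gaps :: "real set \<Rightarrow> bool" where
  "balanced_gaps U \<longleftrightarrow>
     (\<forall>a b a' b'. gap_interval U a b \<longrightarrow> gap_interval U a' b' \<longrightarrow> b - a \<le> 2 * (b' - a'))"

lemma dyadic_gaps_Qset: "r > 0 \<Longrightarrow> dyadic_gaps r (Qset r)"
  unfolding dyadic_gaps_def
  by (metis gap_interval_QsetE power_0 div_by_1 order_refl)

lemma balanced_gaps_Qset: "r > 0 \<Longrightarrow> balanced_gaps (Qset r)"
  unfolding balanced_gaps_def by (metis gap_interval_QsetE qpt_segment_le_twice)

lemma gap_interval_bounds: "U \<subseteq> {0..1} \<Longrightarrow> gap_interval U a b \<Longrightarrow> 0 \<le> a \<and> a < b \<and> b \<le> 1"
  unfolding gap_interval_def by auto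

lemma midpoint_gap_interval:
  assumes "U \<subseteq> {0..1}" "gap_interval U a b"
  shows "(a + b) / 2 \<in> {0<..<1} - U"
  using gap_interval_bounds[OF assms] assms(2) unfolding gap_interval_def by auto

lemma gap_interval_insert_midpoint:
  assumes "U \<subseteq> {0..1}" "gap_interval U a0 b0" "gap_interval (insert ((a0 + b0) / 2) U) a b"
  shows "gap_interval U a b \<or> b - a = (b0 - a0) / 2 \<and> a0 \<le> a \<and> b \<le> b0"
proof -
  let ?x = "(a0 + b0) / 2"
  have "a0 < b0" "?x \<in> {0..1}" using gap_interval_bounds[OF assms(1,2)] by auto
  then have "insert ?x U \<subseteq> {0..1}" using assms(1) by simp
  then have "consecutive (insert ?x U \<union> {0, 1}) a b"
    using assms(3) gap_interval_iff_consecutive by blast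
  then have "consecutive (insert ?x (U \<union> {0, 1})) a b" by (simp only: Un_insert_left)
  moreover have "consecutive (U \<union> {0, 1}) a0 b0" using assms(1,2) gap_interval_iff_consecutive by blast
  ultimately have "consecutive (U \<union> {0, 1}) a b \<or> (a = a0 \<and> b = ?x) \<or> (a = ?x \<and> b = b0)"
    using consecutive_insert[of "U \<union> {0, 1}" a0 b0 ?x] \<open>a0 < b0\<close> by simp
  then show ?thesis using gap_interval_if_consecutive \<open>a0 < b0\<close> by auto
qed

lemma dyadic_gaps_insert_midpoint:
  assumes "U \<subseteq> {0..1}" "dyadic_gaps r U" "gap_interval U a0 b0"
  shows "dyadic_gaps r (insert ((a0 + b0) / 2) U)"
  unfolding dyadic_gaps_def
proof (intro allI impI)
  fix a b assume ab: "gap_interval (insert ((a0 + b0) / 2) U) a b"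
  obtain i e where i: "i \<le> r" "qpt r i \<le> a0" "b0 \<le> qpt r (Suc i)"
    "b0 - a0 = (qpt r (Suc i) - qpt r i) / 2 ^ e"
    using assms(2,3) unfolding dyadic_gaps_def by blast
  show "\<exists>i\<le>r. \<exists>e::nat. qpt r i \<le> a \<and> b \<le> qpt r (Suc i) \<and> b - a = (qpt r (Suc i) - qpt r i) / 2 ^ e"
    using gap_interval_insert_midpoint[OF assms(1,3) ab]
  proof
    assume "gap_interval U a b"
    then show ?thesis using assms(2) unfolding dyadic_gaps_def by blast
  next
    assume half: "b - a = (b0 - a0) / 2 \<and> a0 \<le> a \<and> b \<le> b0"
    then have "qpt r i \<le> a" "b \<le> qpt r (Suc i)" using i(2,3) by linarith+
    moreover have "b - a = (qpt r (Suc i) - qpt r i) / 2 ^ Suc e" using half i(4) by simp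
    ultimately show ?thesis using i(1) by blast
  qed
qed

lemma balanced_gaps_insert_midpoint:
  assumes "U \<subseteq> {0..1}" "balanced_gaps U" "largest_gap U a0 b0"
  shows "balanced_gaps (insert ((a0 + b0) / 2) U)"
proof -
  have gap0: "gap_interval U a0 b0" and largest: "\<And>a b. gap_interval U a b \<Longrightarrow> b - a \<le> b0 - a0"
    using assms(3) unfolding largest_gap_def by auto
  have "0 < b0 - a0" using gap0 unfolding gap_interval_def by simp
  have bounds: "b - a \<le> b0 - a0 \<and> b0 - a0 \<le> 2 * (b - a)"
    if "gap_interval (insert ((a0 + b0) / 2) U) a b" for a b
    using gap_interval_insert_midpoint[OF assms(1) gap0 that]
  proof
    assume "gap_interval U a b"
    then show ?thesis using largest assms(2) gap0 unfolding balanced_gaps_def by blast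
  qed (use \<open>0 < b0 - a0\<close> in simp)
  show ?thesis unfolding balanced_gaps_def using bounds by (meson order_trans)
qed

lemma segment_gap_exponent:
  assumes "r > 0" "finite U" "Qset r \<subseteq> U" "U \<subseteq> {0..1}" "dyadic_gaps r U" "i \<le> r"
  obtains a b E where "gap_interval U a b" "b - a = (qpt r (Suc i) - qpt r i) / 2 ^ E"
    "2 ^ E \<le> real (card ((U \<union> {0, 1}) \<inter> {qpt r i..qpt r (Suc i)})) - 1"
proof -
  define T where "T = (U \<union> {0, 1}) \<inter> {qpt r i..qpt r (Suc i)}"
  have less_iff: "qpt r j < qpt r k \<longleftrightarrow> j < k" for j k
    using strict_mono_less[OF strict_mono_qpt[OF assms(1)]] .
  have "qpt r i \<in> U \<union> {0, 1}" "qpt r (Suc i) \<in> U \<union> {0, 1}"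
    using qpt_in_refinement[OF assms(1,3)] assms(6) by auto
  moreover have "qpt r i < qpt r (Suc i)" using less_iff by simp
  ultimately have ends: "qpt r i \<in> T" "qpt r (Suc i) \<in> T" "qpt r i < qpt r (Suc i)"
    unfolding T_def using assms(6) by auto
  have gap: "gap_interval U a b" if "consecutive T a b" for a b
    using that unfolding T_def by (rule gap_interval_if_consecutive[OF consecutive_Int_atLeastAtMost])
  have dyadic: "\<exists>e::nat. b - a = (qpt r (Suc i) - qpt r i) / 2 ^ e" if ab: "consecutive T a b" for a b
  proof -
    obtain j e where j: "qpt r j \<le> a" "b \<le> qpt r (Suc j)"
      "b - a = (qpt r (Suc j) - qpt r j) / 2 ^ e"
      using assms(5) gap[OF ab] unfolding dyadic_gaps_def by blast
    have "qpt r i \<le> a" "a < b" "b \<le> qpt r (Suc i)" using ab unfolding consecutive_def T_def by auto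
    then have "j < Suc i" "i < Suc j" using j(1,2) less_iff by (meson le_less_trans less_le_trans)+
    then show ?thesis using j(3) by (metis less_antisym not_less_eq)
  qed
  have "finite T" "T \<subseteq> {qpt r i..qpt r (Suc i)}" using assms(2) by (auto simp: T_def)
  then obtain a b E where "consecutive T a b" "b - a = (qpt r (Suc i) - qpt r i) / 2 ^ E"
    "2 ^ E \<le> real (card T) - 1"
    using dyadic_partition_gap_exponent[of T, OF _ ends] dyadic by blast
  then show thesis using that gap unfolding T_def by blast
qed

lemma card_eq_sum_Qset_segments:
  assumes "r > 0" "finite U" "Qset r \<subseteq> U" "U \<subseteq> {0<..<1}"
  shows "real (card U) + 1 = (\<Sum>i\<le>r. real (card ((U \<union> {0, 1}) \<inter> {qpt r i..qpt r (Suc i)})) - 1)"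
proof -
  have "U \<union> {0, 1} \<subseteq> {qpt r 0..qpt r (Suc r)}" using assms(4) qpt_last[OF assms(1)] by auto
  then have "real (card (U \<union> {0, 1}))
      = 1 + (\<Sum>i\<le>r. real (card ((U \<union> {0, 1}) \<inter> {qpt r i..qpt r (Suc i)})) - 1)"
    using card_eq_sum_segments[of "U \<union> {0, 1}" "qpt r" "Suc r"] qpt_in_refinement[OF assms(1,3)]
      assms(2) strict_mono_qpt[OF assms(1)]
    unfolding lessThan_Suc_atMost by (simp add: Int_absorb2)
  moreover have "0 \<notin> insert 1 U" "1 \<notin> U" using assms(4) by auto
  ultimately show ?thesis using assms(2) by simp
qed

lemma gap_interval_length_ge:
  assumes "r > 0" "finite U" "Qset r \<subseteq> U" "U \<subseteq> {0<..<1}"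
    and "dyadic_gaps r U" "balanced_gaps U" "gap_interval U a b"
  shows "1 / (2 * sigma_r r * (real (card U) + 1)) \<le> b - a"
proof -
  define \<sigma> where "\<sigma> = sigma_r r"
  define T where "T i = (U \<union> {0, 1}) \<inter> {qpt r i..qpt r (Suc i)}" for i
  have \<sigma>: "\<sigma> > 0" unfolding \<sigma>_def using sigma_r_pos[OF assms(1)] .
  have "b - a > 0" using assms(7) unfolding gap_interval_def by simp
  have U01: "U \<subseteq> {0..1}" using assms(4) by auto
  have "\<exists>E. 2 ^ E \<le> real (card (T i)) - 1 \<and> 1 / (2 * \<sigma> * (b - a)) \<le> 2 ^ E * real (r + Suc i)"
    if i: "i \<le> r" for i
  proof -
    obtain a' b' E where gap': "gap_interval U a' b'"
      and len: "b' - a' = (qpt r (Suc i) - qpt r i) / 2 ^ E"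
      and card: "2 ^ E \<le> real (card (T i)) - 1"
      using segment_gap_exponent[OF assms(1-3) U01 assms(5) i] unfolding T_def by auto
    have "1 / (real (r + Suc i) * \<sigma> * 2 ^ E) = b' - a'" using len by (simp add: qpt_Suc \<sigma>_def)
    also have "\<dots> \<le> 2 * (b - a)" using assms(6,7) gap' unfolding balanced_gaps_def by blast
    finally have "1 \<le> 2 * (b - a) * (real (r + Suc i) * \<sigma> * 2 ^ E)"
      using \<sigma> by (simp add: pos_divide_le_eq)
    then have "1 \<le> 2 ^ E * real (r + Suc i) * (2 * \<sigma> * (b - a))" by (simp add: algebra_simps)
    then have "1 / (2 * \<sigma> * (b - a)) \<le> 2 ^ E * real (r + Suc i)"
      using \<sigma> \<open>b - a > 0\<close> by (simp add: pos_divide_le_eq)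
    then show ?thesis using card by blast
  qed
  then obtain E where E: "\<And>i. i \<le> r \<Longrightarrow> 2 ^ E i \<le> real (card (T i)) - 1"
    "\<And>i. i \<le> r \<Longrightarrow> 1 / (2 * \<sigma> * (b - a)) \<le> 2 ^ E i * real (r + Suc i)"
    by metis
  have "(\<Sum>i\<le>r. real (card (T i)) - 1) = real (card U) + 1"
    using card_eq_sum_Qset_segments[OF assms(1-4)] unfolding T_def by simp
  moreover have "1 / (2 * \<sigma> * (b - a)) \<le> (\<Sum>i\<le>r. 2 ^ E i)"
    using E(2) by (rule sum_powers_of_two_ge)
  moreover have "(\<Sum>i\<le>r. 2 ^ E i) \<le> (\<Sum>i\<le>r. real (card (T i)) - 1)"
    using E(1) by (intro sum_mono) simp
  ultimately have "1 / (2 * \<sigma> * (b - a)) \<le> real (card U) + 1" by simp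
  then have "1 \<le> (real (card U) + 1) * (2 * \<sigma> * (b - a))"
    using \<sigma> \<open>b - a > 0\<close> by (simp add: pos_divide_le_eq)
  then have "1 \<le> (b - a) * (2 * \<sigma> * (real (card U) + 1))" by (simp add: algebra_simps)
  moreover have "0 < 2 * \<sigma> * (real (card U) + 1)" using \<sigma> by simp
  ultimately show ?thesis unfolding \<sigma>_def[symmetric] by (simp add: pos_divide_le_eq)
qed

lemma separated_if_refines_Qset:
  assumes "r > 0" "finite U" "Qset r \<subseteq> U" "U \<subseteq> {0<..<1}" "dyadic_gaps r U" "balanced_gaps U"
  shows "separated (1 / (2 * sigma_r r * (real (card U) + 1))) U"
  using assms gap_interval_length_ge by (intro separatedI_gap_interval) auto

section \<open>Loads and the objective\<close>

lemma finite_present [simp]: "finite (present n s d t)"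
  by (simp add: present_def)

lemma
  shows card_present_le_maxload: "t \<le> horizon n d \<Longrightarrow> card (present n s d t) \<le> maxload n s d"
    and maxload_attained: "\<exists>t \<le> horizon n d. card (present n s d t) = maxload n s d"
proof -
  let ?M = "{card (present n s d t) | t. t \<le> horizon n d}"
  have "?M \<subseteq> {..n}"
    using card_mono[of "{..<n}" "present n s d _"] by (fastforce simp: present_def)
  then have fin: "finite ?M" by (rule finite_subset) simp
  show "card (present n s d t) \<le> maxload n s d" if "t \<le> horizon n d"
    unfolding maxload_def using that by (intro Max_ge[OF fin]) blast
  have "maxload n s d \<in> ?M" unfolding maxload_def by (rule Max_in[OF fin]) blast
  then show "\<exists>t \<le> horizon n d. card (present n s d t) = maxload n s d" by auto
qed

lemma deadline_le_horizon: "k < n \<Longrightarrow> d k \<le> horizon n d"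
  unfolding horizon_def by (intro Max_ge) auto

lemma dmin_le_inverse_load:
  assumes "\<forall>i\<in>present n s d t. X i \<in> {0..1}" "present n s d t \<noteq> {}"
  shows "dmin n s d t X \<le> ereal (1 / (real (card (present n s d t)) + 1))"
proof (rule ccontr)
  define P where "P = present n s d t"
  define h where "h = 1 / (real (card P) + 1)"
  define Z where "Z = {min \<bar>X i - 0\<bar> \<bar>X i - 1\<bar> | i. i \<in> P} \<union>
    {\<bar>X i - X j\<bar> | i j. i \<in> P \<and> j \<in> P \<and> i \<noteq> j}"
  assume "\<not> dmin n s d t X \<le> ereal (1 / (real (card (present n s d t)) + 1))"
  then have "ereal h < Inf (ereal ` Z)" unfolding dmin_def Z_def P_def h_def by simp
  then have Z: "h < z" if "z \<in> Z" for z
  proof -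
    have "Inf (ereal ` Z) \<le> ereal z" using that by (intro Inf_lower) simp
    with \<open>ereal h < Inf (ereal ` Z)\<close> have "ereal h < ereal z" by (rule order.strict_trans2)
    then show ?thesis by simp
  qed
  have inside: "h < X i \<and> X i < 1 - h" if "i \<in> P" for i
    using Z[of "min \<bar>X i - 0\<bar> \<bar>X i - 1\<bar>"] assms(1) that unfolding Z_def P_def by fastforce
  have apart: "h < \<bar>X i - X j\<bar>" if "i \<in> P" "j \<in> P" "i \<noteq> j" for i j
    using Z that unfolding Z_def by blast
  have "h > 0" unfolding h_def by simp
  then have "inj_on X P" using apart by (intro inj_onI) force
  then have card: "card (X ` P) = card P" by (rule card_image)
  have "finite (X ` P)" "X ` P \<noteq> {}" using assms(2) unfolding P_def by auto
  moreover have "\<forall>v\<in>X ` P. \<forall>w\<in>X ` P. v < w \<longrightarrow> h \<le> w - v" using apart by fastforce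
  ultimately have "real (card P) * h \<le> Max (X ` P)"
    using card_mult_le_Max[of "X ` P" h] inside card by fastforce
  moreover have "Max (X ` P) < 1 - h" using Max_in[OF \<open>finite (X ` P)\<close> \<open>X ` P \<noteq> {}\<close>] inside by auto
  ultimately have "(real (card P) + 1) * h < 1" by (simp add: algebra_simps)
  then show False unfolding h_def by simp
qed

lemma OPT_A_le_inverse_maxload:
  assumes "maxload n s d > 0"
  shows "OPT_A n s d \<le> ereal (1 / (real (maxload n s d) + 1))"
  unfolding OPT_A_def
proof (rule SUP_least)
  fix X :: "nat \<Rightarrow> real" assume X: "X \<in> {X. \<forall>i<n. X i \<in> {0..1}}"
  obtain t where t: "t \<le> horizon n d" "card (present n s d t) = maxload n s d"
    using maxload_attained by blast
  then have "present n s d t \<noteq> {}" using assms by auto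
  moreover have "\<forall>i\<in>present n s d t. X i \<in> {0..1}" using X by (simp add: present_def)
  ultimately have "dmin n s d t X \<le> ereal (1 / (real (maxload n s d) + 1))"
    using dmin_le_inverse_load t(2) by metis
  moreover have "objective n s d X \<le> dmin n s d t X"
    unfolding objective_def using t(1) by (intro INF_lower) simp
  ultimately show "objective n s d X \<le> ereal (1 / (real (maxload n s d) + 1))" by simp
qed

lemma objective_ge_if_separated:
  assumes "separated \<delta> U" "U \<subseteq> {0<..<1}" "\<forall>i<n. X i \<in> U"
    and "\<And>t i j. i \<in> present n s d t \<Longrightarrow> j \<in> present n s d t \<Longrightarrow> i \<noteq> j \<Longrightarrow> X i \<noteq> X j"
  shows "ereal \<delta> \<le> objective n s d X"
  unfolding objective_def
proof (intro INF_greatest)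
  fix t
  have in_U: "X i \<in> U" if "i \<in> present n s d t" for i
    using assms(3) that by (simp add: present_def)
  have "\<delta> \<le> min \<bar>X i - 0\<bar> \<bar>X i - 1\<bar>" if "i \<in> present n s d t" for i
    using assms(1,2) in_U[OF that] unfolding separated_def by fastforce
  moreover have "\<delta> \<le> \<bar>X i - X j\<bar>" if "i \<in> present n s d t" "j \<in> present n s d t" "i \<noteq> j" for i j
    using assms(1) in_U[OF that(1)] in_U[OF that(2)] assms(4)[OF that] unfolding separated_def
    by (cases "X i < X j") (auto simp: abs_if)
  ultimately show "ereal \<delta> \<le> dmin n s d t X"
    unfolding dmin_def by (intro Inf_greatest) auto
qed

section \<open>Runs of the online algorithm\<close>

locale online_run =
  fixes r n :: nat and tau :: "real list" and s d X :: "nat \<Rightarrow> real"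
  assumes r_pos: "r > 0" and set_tau: "set tau = Qset r"
    and inst: "is_instance n s d" and run: "alg_run r tau n s d X"
begin

abbreviation used :: "nat \<Rightarrow> real set" where
  "used k \<equiv> X ` {..<k}"

definition occupied :: "nat \<Rightarrow> real set" where
  "occupied k = X ` {i. i < k \<and> s k \<le> d i}"

lemma occupied_subset_used: "occupied k \<subseteq> used k"
  unfolding occupied_def by auto

lemma run_step:
  assumes "k < n"
  shows "if used k - occupied k \<noteq> {} then X k \<in> used k - occupied k
         else if \<not> Qset r \<subseteq> used k then X k = hd (filter (\<lambda>q. q \<notin> used k) tau)
         else \<exists>a b. largest_gap (used k) a b \<and> X k = (a + b) / 2"
  using run assms unfolding alg_run_def occupied_def Let_def by blast

lemma first_unused_in_Qset:
  assumes "\<not> Qset r \<subseteq> W"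
  shows "hd (filter (\<lambda>q. q \<notin> W) tau) \<in> Qset r - W"
proof -
  have "filter (\<lambda>q. q \<notin> W) tau \<noteq> []" using assms set_tau by (auto simp: filter_empty_conv)
  then show ?thesis using hd_in_set set_tau by fastforce
qed

lemma new_position_unused:
  assumes "k < n" "used k \<subseteq> occupied k"
  shows "X k \<notin> used k"
proof (cases "Qset r \<subseteq> used k")
  case True
  then obtain a b where "gap_interval (used k) a b" "X k = (a + b) / 2"
    using run_step[OF assms(1)] assms(2) unfolding largest_gap_def by auto
  then have "a < X k \<and> X k < b" "\<forall>u\<in>used k. \<not> (a < u \<and> u < b)"
    unfolding gap_interval_def by auto
  then show ?thesis by blast
next
  case False
  then show ?thesis using run_step[OF assms(1)] assms(2) first_unused_in_Qset by auto
qed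

lemma position_not_occupied:
  assumes "k < n"
  shows "X k \<notin> occupied k"
proof (cases "used k \<subseteq> occupied k")
  case True
  then show ?thesis using new_position_unused[OF assms] occupied_subset_used by blast
next
  case False
  then show ?thesis using run_step[OF assms] by auto
qed

lemma positions_distinct:
  assumes "i \<in> present n s d t" "j \<in> present n s d t" "i \<noteq> j"
  shows "X i \<noteq> X j"
proof -
  have "X i \<noteq> X j" if "i < j" "j < n" "s j \<le> d i" for i j
  proof -
    have "X i \<in> occupied j" using that unfolding occupied_def by blast
    then show ?thesis using position_not_occupied[OF that(2)] by auto
  qed
  then show ?thesis using assms unfolding present_def by (metis linorder_neqE_nat mem_Collect_eq order_trans)
qed

lemma card_used_le_maxload: "k \<le> n \<Longrightarrow> card (used k) \<le> maxload n s d"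
proof (induction k)
  case 0
  then show ?case by simp
next
  case (Suc k)
  then have k: "k < n" by simp
  have used_Suc: "used (Suc k) = insert (X k) (used k)" by (simp add: lessThan_Suc)
  show ?case
  proof (cases "used k \<subseteq> occupied k")
    case True
    define I where "I = {i. i < k \<and> s k \<le> d i}"
    have s_d: "s k < d k" and "\<And>i. i \<le> k \<Longrightarrow> s i \<le> s k"
      using inst k unfolding is_instance_def by auto
    then have "insert k I \<subseteq> present n s d (s k)"
      using k unfolding I_def present_def by auto
    then have "card (insert k I) \<le> card (present n s d (s k))" by (intro card_mono) simp_all
    also have "\<dots> \<le> maxload n s d"
      using s_d deadline_le_horizon[of k n d, OF k] by (intro card_present_le_maxload) simp
    finally have "Suc (card I) \<le> maxload n s d" by (simp add: I_def)
    moreover have "card (used k) \<le> card (occupied k)"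
      using True by (intro card_mono) (auto simp: occupied_def)
    moreover have "card (occupied k) \<le> card I" unfolding occupied_def I_def by (rule card_image_le) simp
    ultimately show ?thesis using used_Suc card_insert_le_m1 by (simp add: card_insert_if)
  next
    case False
    then have "X k \<in> used k" using run_step[OF k] by (auto split: if_splits)
    then show ?thesis using Suc used_Suc by (simp add: insert_absorb)
  qed
qed

lemma used_invariant:
  "k \<le> n \<Longrightarrow> used k \<subseteq> {0<..<1} \<and>
     (used k \<subseteq> Qset r \<or> Qset r \<subseteq> used k \<and> dyadic_gaps r (used k) \<and> balanced_gaps (used k))"
proof (induction k)
  case 0
  then show ?case by simp
next
  case (Suc k)
  then have k: "k < n" and U01: "used k \<subseteq> {0<..<1}"
    and IH: "used k \<subseteq> Qset r \<or> Qset r \<subseteq> used k \<and> dyadic_gaps r (used k) \<and> balanced_gaps (used k)"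
    by auto
  have used_Suc: "used (Suc k) = insert (X k) (used k)" by (simp add: lessThan_Suc)
  consider (vacant) "\<not> used k \<subseteq> occupied k" | (new_Q) "used k \<subseteq> occupied k" "\<not> Qset r \<subseteq> used k"
    | (midpoint) "used k \<subseteq> occupied k" "Qset r \<subseteq> used k" by blast
  then show ?case
  proof cases
    case vacant
    then have "X k \<in> used k" using run_step[OF k] by (auto split: if_splits)
    then show ?thesis using Suc used_Suc by (simp add: insert_absorb)
  next
    case new_Q
    then have "X k \<in> Qset r" using run_step[OF k] first_unused_in_Qset by auto
    then show ?thesis using IH new_Q(2) used_Suc Qset_subset[OF r_pos] by auto
  next
    case midpoint
    then obtain a b where ab: "largest_gap (used k) a b" "X k = (a + b) / 2"
      using run_step[OF k] by auto
    have U01': "used k \<subseteq> {0..1}" using U01 by auto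
    have gap: "gap_interval (used k) a b" using ab(1) unfolding largest_gap_def by blast
    have dyadic: "dyadic_gaps r (used k)" and balanced: "balanced_gaps (used k)"
      using IH midpoint(2) dyadic_gaps_Qset[OF r_pos] balanced_gaps_Qset[OF r_pos]
      by (metis subset_antisym)+
    have "dyadic_gaps r (used (Suc k))" "balanced_gaps (used (Suc k))"
      unfolding used_Suc ab(2)
      using dyadic_gaps_insert_midpoint[OF U01' dyadic gap]
        balanced_gaps_insert_midpoint[OF U01' balanced ab(1)] .
    moreover have "X k \<in> {0<..<1}" using midpoint_gap_interval[OF U01' gap] ab(2) by simp
    ultimately show ?thesis using U01 used_Suc midpoint(2) by auto
  qed
qed

lemma used_separated:
  assumes "r \<le> maxload n s d"
  shows "separated (1 / (2 * sigma_r r * (real (maxload n s d) + 1))) (used n)"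
proof -
  have \<sigma>: "sigma_r r > 0" using sigma_r_pos[OF r_pos] .
  have bound_mono: "1 / (2 * sigma_r r * (real (maxload n s d) + 1)) \<le> 1 / (2 * sigma_r r * (real c + 1))"
    if "c \<le> maxload n s d" for c
    using that \<sigma> by (intro divide_left_mono mult_left_mono mult_pos_pos) auto
  have inv: "used n \<subseteq> {0<..<1}"
    "used n \<subseteq> Qset r \<or> Qset r \<subseteq> used n \<and> dyadic_gaps r (used n) \<and> balanced_gaps (used n)"
    using used_invariant[of n] by auto
  then consider "used n \<subseteq> Qset r" | "Qset r \<subseteq> used n" "dyadic_gaps r (used n)" "balanced_gaps (used n)"
    by blast
  then show ?thesis
  proof cases
    case 1
    have "separated (1 / (2 * sigma_r r * (real (card (Qset r)) + 1))) (Qset r)"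
      using separated_if_refines_Qset[OF r_pos finite_Qset order_refl Qset_subset[OF r_pos]]
        dyadic_gaps_Qset[OF r_pos] balanced_gaps_Qset[OF r_pos] by blast
    moreover have "card (Qset r) \<le> maxload n s d" using card_Qset_le[of r] assms by simp
    ultimately show ?thesis using separated_mono 1 bound_mono by blast
  next
    case 2
    have "separated (1 / (2 * sigma_r r * (real (card (used n)) + 1))) (used n)"
      using separated_if_refines_Qset[OF r_pos _ 2(1) inv(1) 2(2,3)] by simp
    then show ?thesis using separated_mono card_used_le_maxload[of n] bound_mono by blast
  qed
qed

end

theorem lemma1:
  fixes r n :: nat and tau :: "real list" and s d X :: "nat \<Rightarrow> real"
  assumes "r > 0"
    and "distinct tau" and "set tau = Qset r"
    and "is_instance n s d"
    and "maxload n s d > r"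
    and "alg_run r tau n s d X"
  shows "OPT_A n s d \<le> ereal (2 * sigma_r r) * objective n s d X"
proof -
  interpret online_run r n tau s d X
    using assms by unfold_locales
  define m where "m = maxload n s d"
  define \<delta> where "\<delta> = 1 / (2 * sigma_r r * (real m + 1))"
  have \<sigma>: "sigma_r r > 0" using sigma_r_pos[OF assms(1)] .
  have "OPT_A n s d \<le> ereal (1 / (real m + 1))"
    using OPT_A_le_inverse_maxload assms(5) unfolding m_def by simp
  also have "1 / (real m + 1) = 2 * sigma_r r * \<delta>" using \<sigma> by (simp add: \<delta>_def)
  also have "ereal (2 * sigma_r r * \<delta>) \<le> ereal (2 * sigma_r r) * objective n s d X"
  proof -
    have "separated \<delta> (used n)" using used_separated assms(5) unfolding \<delta>_def m_def by simp
    then have "ereal \<delta> \<le> objective n s d X"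
      using used_invariant[of n] positions_distinct by (intro objective_ge_if_separated) auto
    then show ?thesis using \<sigma> by (simp add: ereal_mult_left_mono flip: times_ereal.simps(1))
  qed
  finally show ?thesis .
qed

end
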